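(* Let $n\ge2$, $k\ge0$, $\nu_1,\ldots,\nu_n>0$. The map \[ CK_n^{BG}(p)=\Gamma(2\nu_n)\sum_{j=0}^k\frac{\big(-x_nL_-^{[n-1]}\big)^j}{j!\,\Gamma(j+2\nu_n)}\,p,\qquad p\in\mathcal{P}_k(\mathbb{R}^{n-1}), \] is an isomorphism of vector spaces from $\mathcal{P}_k(\mathbb{R}^{n-1})$ onto $\mathcal{H}^{BG}_k(\mathbb{R}^n)$.
   Context: $\mathcal{P}_k(\mathbb{R}^m)$ is the space of real homogeneous polynomials of degree $k$ in $x_1,\ldots,x_m$. For $m\le n$, $L_-^{[m]}=\sum_{j=1}^m\big(x_j\partial_{x_j}^2+2\nu_j\partial_{x_j}\big)$. $\mathcal{H}^{BG}_k(\mathbb{R}^n)=\mathcal{P}_k(\mathbb{R}^n)\cap\ker L_-^{[n]}$. *)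

theory Defs
  imports "HOL-Analysis.Analysis" "HOL-Library.Poly_Mapping"
begin

text \<open>Real polynomials in the variables x_1, x_2, ... are represented by their coefficient
  maps: a monomial x^alpha is an exponent vector alpha :: nat =>0 nat (variables indexed
  from 1), and a polynomial is a finitely supported map from monomials to real coefficients.\<close>

type_synonym rpoly = "(nat \<Rightarrow>\<^sub>0 nat) \<Rightarrow>\<^sub>0 real"

definition pscale :: "real \<Rightarrow> rpoly \<Rightarrow> rpoly" where
  "pscale c p = Poly_Mapping.map (\<lambda>a. c * a) p"

definition pderiv_var :: "nat \<Rightarrow> rpoly \<Rightarrow> rpoly" where
  "pderiv_var j p = (\<Sum>\<alpha>\<in>Poly_Mapping.keys p.
     Poly_Mapping.single (\<alpha> - Poly_Mapping.single j 1) (of_nat (Poly_Mapping.lookup \<alpha> j) * Poly_Mapping.lookup p \<alpha>))"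

definition pmult_var :: "nat \<Rightarrow> rpoly \<Rightarrow> rpoly" where
  "pmult_var j p = (\<Sum>\<alpha>\<in>Poly_Mapping.keys p. Poly_Mapping.single (\<alpha> + Poly_Mapping.single j 1) (Poly_Mapping.lookup p \<alpha>))"

definition homog_polys :: "nat \<Rightarrow> nat \<Rightarrow> rpoly set" where
  "homog_polys k m = {p. \<forall>\<alpha>\<in>Poly_Mapping.keys p. Poly_Mapping.keys \<alpha> \<subseteq> {1..m} \<and> (\<Sum>i\<in>Poly_Mapping.keys \<alpha>. Poly_Mapping.lookup \<alpha> i) = k}"

definition L_minus :: "(nat \<Rightarrow> real) \<Rightarrow> nat \<Rightarrow> rpoly \<Rightarrow> rpoly" where
  "L_minus \<nu> m p = (\<Sum>j=1..m. pmult_var j (pderiv_var j (pderiv_var j p))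
                                + pscale (2 * \<nu> j) (pderiv_var j p))"

definition H_BG :: "(nat \<Rightarrow> real) \<Rightarrow> nat \<Rightarrow> nat \<Rightarrow> rpoly set" where
  "H_BG \<nu> k n = {p \<in> homog_polys k n. L_minus \<nu> n p = 0}"

definition CK_BG :: "(nat \<Rightarrow> real) \<Rightarrow> nat \<Rightarrow> nat \<Rightarrow> rpoly \<Rightarrow> rpoly" where
  "CK_BG \<nu> n k p = (\<Sum>j=0..k.
     pscale (Gamma (2 * \<nu> n) / (fact j * Gamma (real j + 2 * \<nu> n)))
       (((\<lambda>q. - pmult_var n (L_minus \<nu> (n - 1) q)) ^^ j) p))"

end

theory Submission
  imports Defs
begin

text \<open>Put \<open>T = -x\<^sub>n L\<^sub>-\<^bsup>[n-1]\<^esup>\<close>. Since \<open>p\<close> does not involve \<open>x\<^sub>n\<close>, the term \<open>T\<^sup>j p\<close> is exactly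
  the part of \<open>CK(p)\<close> of degree \<open>j\<close> in \<open>x\<^sub>n\<close>. Splitting
  \<open>L\<^sub>-\<^bsup>[n]\<^esup> = L\<^sub>-\<^bsup>[n-1]\<^esup> + (x\<^sub>n \<partial>\<^sub>n\<^sup>2 + 2\<nu>\<^sub>n \<partial>\<^sub>n)\<close>, the second summand maps \<open>x\<^sub>n\<^bsup>j+1\<^esup>\<close> to
  \<open>(j+1)(j+2\<nu>\<^sub>n) x\<^sub>n\<^sup>j\<close>, and the coefficients \<open>1/(j! \<Gamma>(j+2\<nu>\<^sub>n))\<close> are chosen so that this
  cancels against \<open>L\<^sub>-\<^bsup>[n-1]\<^esup>\<close> in every \<open>x\<^sub>n\<close>-degree; hence \<open>CK(p)\<close> lies in the kernel.
  Conversely, read coefficientwise, \<open>L\<^sub>-\<^bsup>[n]\<^esup> h = 0\<close> expresses each coefficient of \<open>h\<close> of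
  \<open>x\<^sub>n\<close>-degree \<open>j+1\<close> through coefficients of \<open>x\<^sub>n\<close>-degree \<open>j\<close>, because \<open>(j+1)(j+2\<nu>\<^sub>n) > 0\<close>.
  So an element of the kernel is determined by its value at \<open>x\<^sub>n = 0\<close>, and substituting
  \<open>x\<^sub>n = 0\<close> inverts \<open>CK\<close>.\<close>

abbreviation lookup :: "('a \<Rightarrow>\<^sub>0 'b::zero) \<Rightarrow> 'a \<Rightarrow> 'b" where
  "lookup \<equiv> Poly_Mapping.lookup"

abbreviation keys :: "('a \<Rightarrow>\<^sub>0 'b::zero) \<Rightarrow> 'a set" where
  "keys \<equiv> Poly_Mapping.keys"

text \<open>The exponent vector of \<open>x\<^sub>j\<close>; \<open>Suc 0\<close> rather than \<open>1\<close> is the simp normal form, so that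
  rewrite rules stated with \<open>var_exp\<close> keep matching.\<close>

abbreviation var_exp :: "nat \<Rightarrow> nat \<Rightarrow>\<^sub>0 nat" where
  "var_exp j \<equiv> Poly_Mapping.single j (Suc 0)"

lemma lookup_pscale [simp]: "lookup (pscale c p) a = c * lookup p a"
  by (simp add: pscale_def map.rep_eq when_def)

lemma add_var_exp_eq_iff: "b + var_exp j = a \<longleftrightarrow> 0 < lookup a j \<and> b = a - var_exp j"
  by (auto simp: poly_mapping_eq_iff fun_eq_iff lookup_add lookup_minus lookup_single when_def)

lemma diff_add_var_exp: "0 < lookup a j \<Longrightarrow> a - var_exp j + var_exp j = a"
  using add_var_exp_eq_iff by blast

lemma lookup_pmult_var:
  "lookup (pmult_var j p) a = (if 0 < lookup a j then lookup p (a - var_exp j) else 0)"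
proof -
  have "lookup (pmult_var j p) a =
      (\<Sum>b\<in>keys p. if b = a - var_exp j then (if 0 < lookup a j then lookup p b else 0) else 0)"
    unfolding pmult_var_def lookup_sum One_nat_def
    by (intro sum.cong refl) (simp only: lookup_single when_def add_var_exp_eq_iff, auto)
  then show ?thesis
    by (simp add: sum.delta' in_keys_iff)
qed

lemma lookup_pmult_var_add [simp]: "lookup (pmult_var j p) (a + var_exp j) = lookup p a"
  by (simp add: lookup_pmult_var lookup_add)

lemma lookup_pmult_var_nonzero:
  assumes "lookup (pmult_var j p) a \<noteq> 0"
  obtains b where "a = b + var_exp j" and "lookup p b \<noteq> 0"
proof -
  have "0 < lookup a j" and "lookup p (a - var_exp j) \<noteq> 0"
    using assms by (auto simp: lookup_pmult_var split: if_splits)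
  then show thesis
    using that[of "a - var_exp j"] diff_add_var_exp by metis
qed

lemma lookup_pderiv_var:
  "lookup (pderiv_var j p) a = (of_nat (lookup a j) + 1) * lookup p (a + var_exp j)"
proof -
  have "lookup (pderiv_var j p) a =
      (\<Sum>b\<in>keys p. if b = a + var_exp j then (of_nat (lookup a j) + 1) * lookup p b else 0)"
    unfolding pderiv_var_def lookup_sum One_nat_def
  proof (intro sum.cong refl)
    fix b
    show "lookup (Poly_Mapping.single (b - var_exp j) (of_nat (lookup b j) * lookup p b)) a =
        (if b = a + var_exp j then (of_nat (lookup a j) + 1) * lookup p b else 0)"
    proof (cases "lookup b j = 0")
      case True
      then have "b \<noteq> a + var_exp j"
        by (auto simp: lookup_add)
      with True show ?thesis
        by (simp add: lookup_single when_def)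
    next
      case False
      then have "b - var_exp j = a \<longleftrightarrow> b = a + var_exp j"
        using add_var_exp_eq_iff[of a j b] by auto
      then show ?thesis
        by (auto simp: lookup_single when_def lookup_add)
    qed
  qed
  then show ?thesis
    by (simp add: sum.delta' in_keys_iff)
qed

definition L_minus_weight :: "(nat \<Rightarrow> real) \<Rightarrow> (nat \<Rightarrow>\<^sub>0 nat) \<Rightarrow> nat \<Rightarrow> real" where
  "L_minus_weight \<nu> a i = (of_nat (lookup a i) + 1) * (of_nat (lookup a i) + 2 * \<nu> i)"

lemma lookup_L_minus:
  "lookup (L_minus \<nu> m p) a = (\<Sum>i=1..m. L_minus_weight \<nu> a i * lookup p (a + var_exp i))"
  unfolding L_minus_def lookup_sum
proof (intro sum.cong refl)
  fix i
  have "lookup (pmult_var i (pderiv_var i (pderiv_var i p))) a =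
      of_nat (lookup a i) * (of_nat (lookup a i) + 1) * lookup p (a + var_exp i)"
  proof (cases "lookup a i = 0")
    case False
    then obtain b where "a = b + var_exp i"
      using diff_add_var_exp by (metis neq0_conv)
    then show ?thesis
      by (simp add: lookup_pderiv_var lookup_add algebra_simps)
  qed (simp add: lookup_pmult_var)
  then show "lookup (pmult_var i (pderiv_var i (pderiv_var i p)) + pscale (2 * \<nu> i) (pderiv_var i p)) a =
      L_minus_weight \<nu> a i * lookup p (a + var_exp i)"
    by (simp add: L_minus_weight_def lookup_add lookup_pderiv_var algebra_simps)
qed

lemma lookup_L_minus_last:
  assumes "0 < n"
  shows "lookup (L_minus \<nu> n p) a =
    lookup (L_minus \<nu> (n - 1) p) a + L_minus_weight \<nu> a n * lookup p (a + var_exp n)"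
proof -
  have "{1..n} = insert n {1..n - 1}"
    using assms by auto
  with assms show ?thesis
    by (simp add: lookup_L_minus ac_simps)
qed

lemma lookup_L_minus_nonzero:
  assumes "lookup (L_minus \<nu> m p) a \<noteq> 0"
  obtains i where "i \<in> {1..m}" and "lookup p (a + var_exp i) \<noteq> 0"
  using assms unfolding lookup_L_minus by (metis (no_types, lifting) mult_zero_right sum.neutral)

definition total_degree :: "(nat \<Rightarrow>\<^sub>0 nat) \<Rightarrow> nat" where
  "total_degree a = (\<Sum>i\<in>keys a. lookup a i)"

lemma total_degree_eq_sum:
  assumes "finite S" and "keys a \<subseteq> S"
  shows "total_degree a = (\<Sum>i\<in>S. lookup a i)"
  unfolding total_degree_def using assms
  by (intro sum.mono_neutral_left) (auto simp: in_keys_iff)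

lemma total_degree_add: "total_degree (a + b) = total_degree a + total_degree b"
proof -
  let ?S = "keys a \<union> keys b"
  have "total_degree (a + b) = (\<Sum>i\<in>?S. lookup a i + lookup b i)"
    using keys_add[of a b] total_degree_eq_sum[of ?S "a + b"] by (simp add: lookup_add)
  also have "\<dots> = total_degree a + total_degree b"
    using total_degree_eq_sum[of ?S a] total_degree_eq_sum[of ?S b] by (simp add: sum.distrib)
  finally show ?thesis .
qed

lemma total_degree_var_exp [simp]: "total_degree (var_exp j) = 1"
  by (simp add: total_degree_def)

lemma lookup_le_total_degree: "lookup a i \<le> total_degree a"
proof -
  have "total_degree a = (\<Sum>j\<in>insert i (keys a). lookup a j)"
    by (simp add: total_degree_eq_sum subset_insertI)
  then show ?thesis
    by (simp add: member_le_sum)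
qed

lemma keys_add_var_exp: "keys (a + var_exp i) = insert i (keys a)"
  by (auto simp: in_keys_iff lookup_add lookup_single when_def split: if_splits)

lemma homog_polys_iff:
  "p \<in> homog_polys k m \<longleftrightarrow> (\<forall>a. lookup p a \<noteq> 0 \<longrightarrow> keys a \<subseteq> {1..m} \<and> total_degree a = k)"
  unfolding homog_polys_def total_degree_def by (auto simp: in_keys_iff)

lemma homog_polys_mono: "m \<le> m' \<Longrightarrow> homog_polys k m \<subseteq> homog_polys k m'"
  unfolding subset_iff homog_polys_iff by (meson atLeastAtMost_iff order.trans subsetD subsetI)

lemma homog_polys_lookup_eq_0:
  assumes "p \<in> homog_polys k m" and "j \<notin> {1..m}" and "0 < lookup a j"
  shows "lookup p a = 0"
  using assms unfolding homog_polys_iff by (metis in_keys_iff not_gr0 subsetD)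

definition CK_step :: "(nat \<Rightarrow> real) \<Rightarrow> nat \<Rightarrow> rpoly \<Rightarrow> rpoly" where
  "CK_step \<nu> n = (\<lambda>q. - pmult_var n (L_minus \<nu> (n - 1) q))"

definition CK_coeff :: "(nat \<Rightarrow> real) \<Rightarrow> nat \<Rightarrow> nat \<Rightarrow> real" where
  "CK_coeff \<nu> n j = Gamma (2 * \<nu> n) / (fact j * Gamma (real j + 2 * \<nu> n))"

lemma CK_BG_eq_sum: "CK_BG \<nu> n k p = (\<Sum>j=0..k. pscale (CK_coeff \<nu> n j) ((CK_step \<nu> n ^^ j) p))"
  unfolding CK_BG_def CK_step_def CK_coeff_def ..

lemma CK_coeff_0:
  assumes "0 < \<nu> n"
  shows "CK_coeff \<nu> n 0 = 1"
proof -
  have "0 < Gamma (2 * \<nu> n)"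
    using assms by (simp add: Gamma_real_pos)
  then show ?thesis
    by (simp add: CK_coeff_def)
qed

lemma CK_coeff_Suc:
  assumes "0 < \<nu> n"
  shows "(real j + 1) * (real j + 2 * \<nu> n) * CK_coeff \<nu> n (Suc j) = CK_coeff \<nu> n j"
proof -
  let ?X = "(real j + 1) * (real j + 2 * \<nu> n)"
  have pos: "0 < real j + 2 * \<nu> n"
    using assms by simp
  then have "Gamma (real (Suc j) + 2 * \<nu> n) = (real j + 2 * \<nu> n) * Gamma (real j + 2 * \<nu> n)"
    using Gamma_plus1[of "real j + 2 * \<nu> n"] nonpos_Ints_nonpos by (fastforce simp: algebra_simps)
  then have denom: "fact (Suc j) * Gamma (real (Suc j) + 2 * \<nu> n) =
      ?X * (fact j * Gamma (real j + 2 * \<nu> n))"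
    by (simp add: algebra_simps)
  have "?X \<noteq> 0"
    using pos by simp
  then show ?thesis
    unfolding CK_coeff_def denom times_divide_eq_right by (rule nonzero_mult_divide_mult_cancel_left)
qed

lemma lookup_CK_step_add [simp]:
  "lookup (CK_step \<nu> n q) (a + var_exp n) = - lookup (L_minus \<nu> (n - 1) q) a"
  by (simp add: CK_step_def)

lemma lookup_CK_step_nonzero:
  assumes "lookup (CK_step \<nu> n q) a \<noteq> 0"
  obtains b i where "a = b + var_exp n" and "i \<in> {1..n - 1}" and "lookup q (b + var_exp i) \<noteq> 0"
proof -
  obtain b where "a = b + var_exp n" and "lookup (L_minus \<nu> (n - 1) q) b \<noteq> 0"
    using assms unfolding CK_step_def by (auto elim: lookup_pmult_var_nonzero)
  then show thesis
    using that by (auto elim: lookup_L_minus_nonzero)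
qed

lemma CK_step_linear:
  "CK_step \<nu> n (pscale x p + pscale y q) = pscale x (CK_step \<nu> n p) + pscale y (CK_step \<nu> n q)"
  by (rule poly_mapping_eqI)
    (simp add: CK_step_def lookup_pmult_var lookup_L_minus lookup_add sum_distrib_left
      sum.distrib algebra_simps)

lemma CK_step_pow_linear:
  "(CK_step \<nu> n ^^ j) (pscale x p + pscale y q) =
    pscale x ((CK_step \<nu> n ^^ j) p) + pscale y ((CK_step \<nu> n ^^ j) q)"
  by (induction j) (simp_all add: CK_step_linear)

lemma CK_BG_linear:
  "CK_BG \<nu> n k (pscale x p + pscale y q) = pscale x (CK_BG \<nu> n k p) + pscale y (CK_BG \<nu> n k q)"
  by (rule poly_mapping_eqI)
    (simp add: CK_BG_eq_sum CK_step_pow_linear lookup_sum lookup_add sum_distrib_left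
      sum.distrib algebra_simps)

lemma CK_step_homog:
  assumes q: "q \<in> homog_polys k n"
  shows "CK_step \<nu> n q \<in> homog_polys k n"
  unfolding homog_polys_iff
proof (intro allI impI)
  fix a
  assume "lookup (CK_step \<nu> n q) a \<noteq> 0"
  then obtain b i where a: "a = b + var_exp n" and i: "i \<in> {1..n - 1}"
    and nz: "lookup q (b + var_exp i) \<noteq> 0"
    by (rule lookup_CK_step_nonzero)
  have "keys (b + var_exp i) \<subseteq> {1..n}" and deg: "total_degree (b + var_exp i) = k"
    using q nz unfolding homog_polys_iff by blast+
  moreover have "n \<in> {1..n}"
    using i by auto
  ultimately have "keys a \<subseteq> {1..n}"
    unfolding a keys_add_var_exp by blast
  moreover have "total_degree a = k"
    using deg unfolding a total_degree_add by simp
  ultimately show "keys a \<subseteq> {1..n} \<and> total_degree a = k" ..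
qed

lemma CK_step_pow_homog: "q \<in> homog_polys k n \<Longrightarrow> (CK_step \<nu> n ^^ j) q \<in> homog_polys k n"
  by (induction j) (auto intro: CK_step_homog)

lemma lookup_CK_step_pow_nonzero:
  assumes p: "p \<in> homog_polys k (n - 1)" and nz: "lookup ((CK_step \<nu> n ^^ j) p) a \<noteq> 0"
  shows "lookup a n = j"
  using nz
proof (induction j arbitrary: a)
  case 0
  then show ?case
    using homog_polys_lookup_eq_0[OF p, of n a] by fastforce
next
  case (Suc j)
  then obtain b i where a: "a = b + var_exp n" and i: "i \<in> {1..n - 1}"
    and "lookup ((CK_step \<nu> n ^^ j) p) (b + var_exp i) \<noteq> 0"
    by (auto elim: lookup_CK_step_nonzero)
  have "lookup (b + var_exp i) n = j"
    by (rule Suc.IH) fact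
  moreover have "i \<noteq> n"
    using i by auto
  ultimately show ?case
    unfolding a by (simp add: lookup_add lookup_single)
qed

lemma CK_step_pow_eq_0:
  assumes p: "p \<in> homog_polys k (n - 1)" and "k < j"
  shows "(CK_step \<nu> n ^^ j) p = 0"
proof (rule poly_mapping_eqI, rule ccontr)
  fix a
  assume "lookup ((CK_step \<nu> n ^^ j) p) a \<noteq> lookup 0 a"
  then have nz: "lookup ((CK_step \<nu> n ^^ j) p) a \<noteq> 0"
    by simp
  have "(CK_step \<nu> n ^^ j) p \<in> homog_polys k n"
    using p homog_polys_mono[of "n - 1" n] by (auto intro: CK_step_pow_homog)
  then have "total_degree a = k"
    using nz unfolding homog_polys_iff by blast
  moreover have "lookup a n = j"
    using lookup_CK_step_pow_nonzero[OF p nz] .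
  ultimately show False
    using lookup_le_total_degree[of a n] \<open>k < j\<close> by simp
qed

lemma lookup_CK_BG:
  assumes p: "p \<in> homog_polys k (n - 1)"
  shows "lookup (CK_BG \<nu> n k p) a =
    CK_coeff \<nu> n (lookup a n) * lookup ((CK_step \<nu> n ^^ lookup a n) p) a"
proof -
  let ?j = "lookup a n"
  let ?t = "\<lambda>j. CK_coeff \<nu> n j * lookup ((CK_step \<nu> n ^^ j) p) a"
  have "lookup (CK_BG \<nu> n k p) a = (\<Sum>j=0..k. if j = ?j then ?t ?j else 0)"
    unfolding CK_BG_eq_sum lookup_sum using lookup_CK_step_pow_nonzero[OF p]
    by (intro sum.cong refl) fastforce
  also have "\<dots> = ?t ?j"
    using CK_step_pow_eq_0[OF p, of ?j] by (auto simp: sum.delta')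
  finally show ?thesis .
qed

lemma CK_BG_homog:
  assumes p: "p \<in> homog_polys k (n - 1)"
  shows "CK_BG \<nu> n k p \<in> homog_polys k n"
  unfolding homog_polys_iff
proof (intro allI impI)
  fix a
  assume "lookup (CK_BG \<nu> n k p) a \<noteq> 0"
  then have "lookup ((CK_step \<nu> n ^^ lookup a n) p) a \<noteq> 0"
    unfolding lookup_CK_BG[OF p] by simp
  moreover have "(CK_step \<nu> n ^^ lookup a n) p \<in> homog_polys k n"
    using p homog_polys_mono[of "n - 1" n] by (auto intro: CK_step_pow_homog)
  ultimately show "keys a \<subseteq> {1..n} \<and> total_degree a = k"
    unfolding homog_polys_iff by blast
qed

lemma CK_BG_in_kernel:
  assumes n: "0 < n" and \<nu>: "0 < \<nu> n" and p: "p \<in> homog_polys k (n - 1)"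
  shows "L_minus \<nu> n (CK_BG \<nu> n k p) = 0"
proof (rule poly_mapping_eqI)
  fix a :: "nat \<Rightarrow>\<^sub>0 nat"
  let ?f = "CK_BG \<nu> n k p"
  define j where "j = lookup a n"
  define q where "q = (CK_step \<nu> n ^^ j) p"
  define S where "S = lookup (L_minus \<nu> (n - 1) q) a"
  have "lookup (L_minus \<nu> (n - 1) ?f) a = CK_coeff \<nu> n j * S"
    unfolding S_def lookup_L_minus sum_distrib_left
  proof (intro sum.cong refl)
    fix i
    assume "i \<in> {1..n - 1}"
    then have "lookup (a + var_exp i) n = j"
      by (auto simp: j_def lookup_add lookup_single)
    then show "L_minus_weight \<nu> a i * lookup ?f (a + var_exp i) =
        CK_coeff \<nu> n j * (L_minus_weight \<nu> a i * lookup q (a + var_exp i))"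
      by (simp add: lookup_CK_BG[OF p] q_def)
  qed
  moreover have "lookup ?f (a + var_exp n) = - CK_coeff \<nu> n (Suc j) * S"
    by (simp add: lookup_CK_BG[OF p] lookup_add j_def q_def S_def)
  moreover have "L_minus_weight \<nu> a n * CK_coeff \<nu> n (Suc j) = CK_coeff \<nu> n j"
    using CK_coeff_Suc[of \<nu> n j] \<nu> by (simp add: L_minus_weight_def j_def)
  ultimately show "lookup (L_minus \<nu> n ?f) a = lookup 0 a"
    by (simp add: lookup_L_minus_last[OF n] algebra_simps)
qed

lemma CK_BG_in_H_BG:
  "0 < n \<Longrightarrow> 0 < \<nu> n \<Longrightarrow> p \<in> homog_polys k (n - 1) \<Longrightarrow> CK_BG \<nu> n k p \<in> H_BG \<nu> k n"
  unfolding H_BG_def by (simp add: CK_BG_homog CK_BG_in_kernel)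

definition subst_var_zero :: "nat \<Rightarrow> rpoly \<Rightarrow> rpoly" where
  "subst_var_zero j h = Poly_Mapping.mapp (\<lambda>a c. c when lookup a j = 0) h"

lemma lookup_subst_var_zero: "lookup (subst_var_zero j h) a = (lookup h a when lookup a j = 0)"
  by (simp add: subst_var_zero_def lookup_mapp when_def in_keys_iff)

lemma subst_var_zero_homog:
  assumes "h \<in> homog_polys k n"
  shows "subst_var_zero n h \<in> homog_polys k (n - 1)"
  unfolding homog_polys_iff
proof (intro allI impI)
  fix a
  assume "lookup (subst_var_zero n h) a \<noteq> 0"
  then have "lookup a n = 0" and "lookup h a \<noteq> 0"
    by (auto simp: lookup_subst_var_zero when_def split: if_splits)
  then have "n \<notin> keys a" and "keys a \<subseteq> {1..n}" and "total_degree a = k"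
    using assms unfolding homog_polys_iff by (auto simp: in_keys_iff)
  moreover have "{1..n} - {n} = {1..n - 1}"
    by auto
  ultimately show "keys a \<subseteq> {1..n - 1} \<and> total_degree a = k"
    by blast
qed

lemma subst_var_zero_CK_BG:
  assumes "0 < \<nu> n" and p: "p \<in> homog_polys k (n - 1)"
  shows "subst_var_zero n (CK_BG \<nu> n k p) = p"
proof (rule poly_mapping_eqI)
  fix a
  have "n \<notin> {1..n - 1}"
    by auto
  then show "lookup (subst_var_zero n (CK_BG \<nu> n k p)) a = lookup p a"
    using homog_polys_lookup_eq_0[OF p, of n a] CK_coeff_0[of \<nu> n] assms(1)
    by (auto simp: lookup_subst_var_zero lookup_CK_BG[OF p] when_def)
qed

text \<open>The kernel equation at the monomial \<open>x\<^sup>b\<close> determines the coefficient of \<open>x\<^sup>b x\<^sub>n\<close>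
  from coefficients of lower degree in \<open>x\<^sub>n\<close>, since its weight \<open>(b\<^sub>n + 1)(b\<^sub>n + 2\<nu>\<^sub>n)\<close> is positive.\<close>

lemma eq_if_L_minus_eq_and_subst_var_zero_eq:
  assumes n: "0 < n" and \<nu>: "0 < \<nu> n"
    and L: "L_minus \<nu> n f = L_minus \<nu> n g" and base: "subst_var_zero n f = subst_var_zero n g"
  shows "f = g"
proof (rule poly_mapping_eqI)
  fix a :: "nat \<Rightarrow>\<^sub>0 nat"
  have "\<forall>a. lookup a n = m \<longrightarrow> lookup f a = lookup g a" for m
  proof (induction m)
    case 0
    then show ?case
      using base by (metis lookup_subst_var_zero when_simps(1))
  next
    case (Suc m)
    show ?case
    proof (intro allI impI)
      fix a :: "nat \<Rightarrow>\<^sub>0 nat"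
      assume am: "lookup a n = Suc m"
      define b where "b = a - var_exp n"
      have a: "a = b + var_exp n"
        using diff_add_var_exp[of a n] am by (simp add: b_def)
      have "lookup b n = m"
        using am by (simp add: a lookup_add)
      then have "lookup (L_minus \<nu> (n - 1) f) b = lookup (L_minus \<nu> (n - 1) g) b"
        unfolding lookup_L_minus using Suc.IH by (intro sum.cong refl) (auto simp: lookup_add lookup_single)
      moreover have "0 < L_minus_weight \<nu> b n"
        using \<nu> by (simp add: L_minus_weight_def)
      ultimately show "lookup f a = lookup g a"
        using L lookup_L_minus_last[OF n, of \<nu> f b] lookup_L_minus_last[OF n, of \<nu> g b]
        by (simp add: a)
    qed
  qed
  then show "lookup f a = lookup g a"
    by blast
qed

lemma CK_BG_subst_var_zero:
  assumes n: "0 < n" and \<nu>: "0 < \<nu> n" and h: "h \<in> H_BG \<nu> k n"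
  shows "CK_BG \<nu> n k (subst_var_zero n h) = h"
proof (rule eq_if_L_minus_eq_and_subst_var_zero_eq[where \<nu> = \<nu>, OF n \<nu>])
  have p: "subst_var_zero n h \<in> homog_polys k (n - 1)"
    using h unfolding H_BG_def by (blast intro: subst_var_zero_homog)
  then show "L_minus \<nu> n (CK_BG \<nu> n k (subst_var_zero n h)) = L_minus \<nu> n h"
    using h CK_BG_in_kernel[where \<nu> = \<nu>, OF n \<nu>] by (simp add: H_BG_def)
  show "subst_var_zero n (CK_BG \<nu> n k (subst_var_zero n h)) = subst_var_zero n h"
    using \<nu> p by (rule subst_var_zero_CK_BG)
qed

theorem theorem4p2:
  fixes n k :: nat and \<nu> :: "nat \<Rightarrow> real"
  assumes "n \<ge> 2" and "\<forall>j\<in>{1..n}. \<nu> j > 0"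
  shows "(\<forall>p\<in>homog_polys k (n - 1). \<forall>q\<in>homog_polys k (n - 1). \<forall>a b :: real.
            CK_BG \<nu> n k (pscale a p + pscale b q) = pscale a (CK_BG \<nu> n k p) + pscale b (CK_BG \<nu> n k q))
         \<and> bij_betw (CK_BG \<nu> n k) (homog_polys k (n - 1)) (H_BG \<nu> k n)"
proof -
  have n: "0 < n" and \<nu>: "0 < \<nu> n"
    using assms by auto
  have "bij_betw (CK_BG \<nu> n k) (homog_polys k (n - 1)) (H_BG \<nu> k n)"
  proof (rule bij_betw_byWitness[where f' = "subst_var_zero n"])
    show "\<forall>p\<in>homog_polys k (n - 1). subst_var_zero n (CK_BG \<nu> n k p) = p"
      using subst_var_zero_CK_BG[of \<nu> n] \<nu> by blast
    show "\<forall>h\<in>H_BG \<nu> k n. CK_BG \<nu> n k (subst_var_zero n h) = h"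
      using CK_BG_subst_var_zero[where \<nu> = \<nu>, OF n \<nu>] by blast
    show "CK_BG \<nu> n k ` homog_polys k (n - 1) \<subseteq> H_BG \<nu> k n"
      using CK_BG_in_H_BG[where \<nu> = \<nu>, OF n \<nu>] by blast
    show "subst_var_zero n ` H_BG \<nu> k n \<subseteq> homog_polys k (n - 1)"
      unfolding H_BG_def by (blast intro: subst_var_zero_homog)
  qed
  then show ?thesis
    by (simp add: CK_BG_linear)
qed

end
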